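(* Let $a,d$ be real numbers and let $A_{n,k}(a,d)$ be the general Eulerian numbers defined below. Then for all integers $n\ge 1$ and $m\ge 1$, $$\sum_{i=1}^m (a+(i-1)d)^n=\sum_{j=-1}^{n-1}A_{n,j}(a,d)\binom{m+j+1}{n+1}.$$
   Context: For real numbers $a,d$, the general Eulerian numbers $A_{n,k}(a,d)$ (integers $n\ge 0$, $k$) are defined by $A_{0,-1}(a,d)=1$, $A_{n,k}(a,d)=0$ whenever $k\ge n$ or $k\le -2$ (in particular $A_{0,k}=0$ for $k\neq -1$), and for $n\ge 1$, $-1\le k\le n-1$: $$A_{n,k}(a,d)=(-a+(k+2)d)A_{n-1,k}(a,d)+(a+(n-k-1)d)A_{n-1,k-1}(a,d).$$ For a nonnegative integer $x$ and $n\ge 0$, $\binom{x}{n}=x(x-1)\cdots(x-n+1)/n!$ (so it is $0$ when $x<n$). *)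

theory Defs
  imports Complex_Main
begin

fun genEuler :: "real \<Rightarrow> real \<Rightarrow> nat \<Rightarrow> int \<Rightarrow> real" where
  "genEuler a d 0 k = (if k = -1 then 1 else 0)"
| "genEuler a d (Suc n) k =
     (if k \<ge> int (Suc n) \<or> k \<le> -2 then 0
      else (- a + of_int (k + 2) * d) * genEuler a d n k
         + (a + of_int (int (Suc n) - k - 1) * d) * genEuler a d n (k - 1))"

end

theory Submission
  imports Defs
begin

text \<open>The identity is a summed form of the Worpitzky-type expansion
  \<open>(a + x d)^n = \<Sum>\<^sub>j A\<^sub>n\<^sub>,\<^sub>j(a,d) C(x+j+1, n)\<close>, proved by induction on \<open>n\<close>: multiplying a
  term \<open>C(x+j+1, n)\<close> by \<open>a + x d\<close> splits it into two binomials of order \<open>n+1\<close> whose coefficients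
  are exactly the two factors of the Eulerian recurrence. Summing over \<open>x = 0, \<dots>, m-1\<close> then
  telescopes each \<open>C(x+j+1, n)\<close> by Pascal's rule into \<open>C(m+j+1, n+1)\<close>.\<close>

lemma genEuler_eq_0: "k \<le> -2 \<or> k \<ge> int n \<Longrightarrow> genEuler a d n k = 0"
  by (cases n) auto

text \<open>The index shift \<open>k = j + 1\<close> makes the range of nonzero values the natural interval \<open>{0..n}\<close>.\<close>

definition genEuler_nat :: "real \<Rightarrow> real \<Rightarrow> nat \<Rightarrow> nat \<Rightarrow> real" where
  "genEuler_nat a d n k = genEuler a d n (int k - 1)"

lemma genEuler_nat_0: "genEuler_nat a d 0 k = (if k = 0 then 1 else 0)"
  by (simp add: genEuler_nat_def)

lemma genEuler_nat_eq_0: "n < k \<Longrightarrow> genEuler_nat a d n k = 0"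
  unfolding genEuler_nat_def by (rule genEuler_eq_0) auto

lemma genEuler_nat_Suc:
  assumes "k \<le> Suc n"
  shows "genEuler_nat a d (Suc n) k =
      (- a + (real k + 1) * d) * genEuler_nat a d n k
    + (a + (real n + 1 - real k) * d) * (if k = 0 then 0 else genEuler_nat a d n (k - 1))"
proof -
  have "genEuler a d n (int k - 2) = (if k = 0 then 0 else genEuler_nat a d n (k - 1))"
    using genEuler_eq_0[of "int k - 2" n a d] by (cases k) (auto simp: genEuler_nat_def)
  with assms show ?thesis
    unfolding genEuler_nat_def by (simp add: algebra_simps)
qed

lemma Suc_times_binomial_real:
  "real (Suc k) * real (Suc y choose Suc k) = real (Suc y) * real (y choose k)"
  by (metis Suc_times_binomial of_nat_mult)

lemma Suc_times_binomial_Suc_real: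
  "real (Suc k) * real (y choose Suc k) = (real y - real k) * real (y choose k)"
  using Suc_times_binomial_real[of k y] by (simp add: algebra_simps)

lemma linear_times_binomial_split:
  "(a + (real y - real k) * d) * real (y choose n)
     = (a + (real n - real k) * d) * real (Suc y choose Suc n)
     + (- a + (real k + 1) * d) * real (y choose Suc n)"
proof -
  let ?C = "real (y choose n)"
  have "real (Suc n) * ((a + (real n - real k) * d) * real (Suc y choose Suc n)
          + (- a + (real k + 1) * d) * real (y choose Suc n))
      = (a + (real n - real k) * d) * (real (Suc n) * real (Suc y choose Suc n))
          + (- a + (real k + 1) * d) * (real (Suc n) * real (y choose Suc n))"
    by (simp only: distrib_left mult.left_commute)
  also have "\<dots> = (a + (real n - real k) * d) * (real (Suc y) * ?C)
          + (- a + (real k + 1) * d) * ((real y - real n) * ?C)"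
    by (simp only: Suc_times_binomial_real[of n y] Suc_times_binomial_Suc_real[of n y])
  also have "\<dots> = real (Suc n) * ((a + (real y - real k) * d) * ?C)"
    by (simp add: algebra_simps)
  finally show ?thesis
    by (simp del: of_nat_Suc)
qed

lemma power_linear_genEuler_binomial:
  "(a + real x * d) ^ n = (\<Sum>k=0..n. genEuler_nat a d n k * real ((x + k) choose n))"
proof (induction n)
  case 0
  then show ?case by (simp add: genEuler_nat_0)
next
  case (Suc n)
  let ?E = "genEuler_nat a d n"
  let ?down = "\<lambda>k. (a + (real n + 1 - real k) * d) * (if k = 0 then 0 else ?E (k - 1))"
  let ?up = "\<lambda>k. (- a + (real k + 1) * d) * ?E k"
  have split: "(a + real x * d) * real ((x + k) choose n)
      = (a + (real n - real k) * d) * real ((x + Suc k) choose Suc n)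
      + (- a + (real k + 1) * d) * real ((x + k) choose Suc n)" for k
    using linear_times_binomial_split[of a "x + k" k d n] by simp
  have "(a + real x * d) ^ Suc n
      = (\<Sum>k=0..n. ?E k * ((a + real x * d) * real ((x + k) choose n)))"
    by (simp add: Suc.IH sum_distrib_left mult.left_commute)
  also have "\<dots> = (\<Sum>k=0..n. (a + (real n - real k) * d) * ?E k * real ((x + Suc k) choose Suc n)
      + ?up k * real ((x + k) choose Suc n))"
    by (rule sum.cong[OF refl]) (subst split, simp add: algebra_simps)
  also have "\<dots> = (\<Sum>k=0..n. (a + (real n - real k) * d) * ?E k * real ((x + Suc k) choose Suc n))
      + (\<Sum>k=0..n. ?up k * real ((x + k) choose Suc n))"
    by (rule sum.distrib)
  also have "(\<Sum>k=0..n. (a + (real n - real k) * d) * ?E k * real ((x + Suc k) choose Suc n))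
      = (\<Sum>k=0..Suc n. ?down k * real ((x + k) choose Suc n))"
    by (subst sum.atLeast0_atMost_Suc_shift) (simp add: algebra_simps)
  also have "(\<Sum>k=0..n. ?up k * real ((x + k) choose Suc n))
      = (\<Sum>k=0..Suc n. ?up k * real ((x + k) choose Suc n))"
    by (simp add: genEuler_nat_eq_0)
  also have "(\<Sum>k=0..Suc n. ?down k * real ((x + k) choose Suc n))
      + (\<Sum>k=0..Suc n. ?up k * real ((x + k) choose Suc n))
      = (\<Sum>k=0..Suc n. genEuler_nat a d (Suc n) k * real ((x + k) choose Suc n))"
    by (simp add: sum.distrib[symmetric] genEuler_nat_Suc algebra_simps)
  finally show ?case .
qed

lemma sum_arith_progression_power_genEuler:
  "(\<Sum>i=1..m. (a + (real i - 1) * d) ^ n)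
     = (\<Sum>k=0..n. genEuler_nat a d n k * real ((m + k) choose Suc n))"
proof (induction m)
  case 0
  then show ?case by (auto intro!: sum.neutral simp: binomial_eq_0)
next
  case (Suc m)
  have "(\<Sum>i=1..Suc m. (a + (real i - 1) * d) ^ n)
      = (\<Sum>i=1..m. (a + (real i - 1) * d) ^ n) + (a + real m * d) ^ n"
    by simp
  also have "\<dots> = (\<Sum>k=0..n. genEuler_nat a d n k
                     * (real ((m + k) choose Suc n) + real ((m + k) choose n)))"
    by (simp only: Suc.IH power_linear_genEuler_binomial sum.distrib[symmetric] distrib_left)
  also have "\<dots> = (\<Sum>k=0..n. genEuler_nat a d n k * real ((Suc m + k) choose Suc n))"
    by (simp add: add.commute)
  finally show ?case .
qed

lemma sum_from_minus_one_reindex_nat: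
  "(\<Sum>j=-1..int n - 1. f j) = (\<Sum>k=0..n. f (int k - 1))"
proof -
  have "{-1..int n - 1} = (\<lambda>k. int k - 1) ` {0..n}"
  proof (intro equalityI subsetI)
    fix j
    assume "j \<in> {-1..int n - 1}"
    then show "j \<in> (\<lambda>k. int k - 1) ` {0..n}"
      by (intro image_eqI[of _ _ "nat (j + 1)"]) auto
  qed auto
  moreover have "inj_on (\<lambda>k::nat. int k - 1) {0..n}"
    by (auto simp: inj_on_def)
  ultimately show ?thesis
    by (simp add: sum.reindex)
qed

theorem lemma2p4:
  fixes a d :: real and n m :: nat
  assumes "n \<ge> 1" and "m \<ge> 1"
  shows "(\<Sum>i=1..m. (a + (real i - 1) * d) ^ n)
       = (\<Sum>j=-1..int n - 1. genEuler a d n j * real (nat (int m + j + 1) choose (n + 1)))"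
  unfolding sum_arith_progression_power_genEuler sum_from_minus_one_reindex_nat
  by (simp add: genEuler_nat_def nat_add_distrib)

end
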